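(* Consider three agents $a,b,c$, each starting with an input value in $\{0,1\}$ (all $8$ input assignments are possible), communicating for exactly one round in the full-information test-and-set model described in the context. There is no decision protocol solving the (0-)majority consensus task in one round: there is no family of functions $\delta_i$ ($i\in\{a,b,c\}$), mapping the possible local states of agent $i$ after one round to $\{0,1\}$, such that for every input assignment and every communication graph of the test-and-set model, the output triple $(\delta_a(\ell_a),\delta_b(\ell_b),\delta_c(\ell_c))$ satisfies both majority agreement and validity.
   Context: Agents: $\mathrm{Ag}=\{a,b,c\}$. A communication graph is a reflexive relation $G \subseteq \mathrm{Ag}\times\mathrm{Ag}$; write $j \to i$ for $(j,i)\in G$. Full-information round: initially the local state of agent $i$ is its input value $x_i$; after a round with graph $G$, the local state of agent $i$ is the tuple $(m_a,m_b,m_c)$ where $m_j=x_j$ if $j\to i$ in $G$ and $m_j=\bot$ otherwise. The graph is chosen arbitrarily from the model's set of graphs. The test-and-set model consists of $9$ graphs: choose a winner $w\in\mathrm{Ag}$, and let $u,v$ be the two other agents (losers); besides reflexive loops, the graph contains $w\to u$ and $w\to v$ (the winner receives from no one), and among the losers either only $u\to v$, or only $v\to u$, or both $u\to v$ and $v\to u$. Majority consensus task: each agent outputs a value in $\{0,1\}$ computed only from its local state; (majority agreement) either all three outputs are equal, or at least two of the outputs are $0$; (validity) every output value is one of the input values of the execution (in particular, if all inputs equal $v$ then all outputs equal $v$). *)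

theory Defs
  imports Main
begin

datatype agent = Ag_a | Ag_b | Ag_c

type_synonym graph = "(agent \<times> agent) set"

definition local_state :: "graph \<Rightarrow> (agent \<Rightarrow> nat) \<Rightarrow> agent \<Rightarrow> (agent \<Rightarrow> nat option)" where
  "local_state G x i = (\<lambda>j. if (j, i) \<in> G then Some (x j) else None)"

text \<open>Test-and-set graph with winner w and losers u, v: reflexive loops, w -> u, w -> v,
  and among losers only u -> v, only v -> u, or both.\<close>
definition tas_graphs :: "graph set" where
  "tas_graphs = {G. \<exists>w u v. distinct [w, u, v] \<and>
      (G = Id \<union> {(w,u),(w,v),(u,v)} \<or>
       G = Id \<union> {(w,u),(w,v),(v,u)} \<or>
       G = Id \<union> {(w,u),(w,v),(u,v),(v,u)})}"

definition input_assignments :: "(agent \<Rightarrow> nat) set" where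
  "input_assignments = {x. \<forall>i. x i \<in> {0,1}}"

definition majority_agreement :: "(agent \<Rightarrow> nat) \<Rightarrow> bool" where
  "majority_agreement y \<longleftrightarrow> (y Ag_a = y Ag_b \<and> y Ag_b = y Ag_c) \<or>
      card {i. y i = 0} \<ge> 2"

definition validity :: "(agent \<Rightarrow> nat) \<Rightarrow> (agent \<Rightarrow> nat) \<Rightarrow> bool" where
  "validity x y \<longleftrightarrow> (\<forall>i. \<exists>j. y i = x j)"

definition solves_majority_consensus :: "(agent \<Rightarrow> (agent \<Rightarrow> nat option) \<Rightarrow> nat) \<Rightarrow> bool" where
  "solves_majority_consensus \<delta> \<longleftrightarrow>
     (\<forall>x \<in> input_assignments. \<forall>G \<in> tas_graphs.
        let y = (\<lambda>i. \<delta> i (local_state G x i)) in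
        (\<forall>i. y i \<in> {0,1}) \<and> majority_agreement y \<and> validity x y)"

end

theory Submission
  imports Defs
begin

text \<open>Seven executions suffice. With all inputs equal, validity fixes the decisions on the
  views (1,\<bottom>,\<bottom>), (1,1,\<bottom>), (\<bottom>,1,\<bottom>) and (\<bottom>,\<bottom>,0). On input (1,1,0) an agent
  deciding 1 forces the other two to agree; chaining this through four test-and-set graphs
  makes c and b decide 1 and a decide 0 on the full view (1,1,0). But with winner b and
  a \<leftrightarrow> c, agents a and c both see (1,1,0) while b decides 1 on (\<bottom>,1,\<bottom>), so a and c
  would have to agree.\<close>

definition agent_tuple :: "'b \<Rightarrow> 'b \<Rightarrow> 'b \<Rightarrow> agent \<Rightarrow> 'b" where
  "agent_tuple p q r = (\<lambda>j. case j of Ag_a \<Rightarrow> p | Ag_b \<Rightarrow> q | Ag_c \<Rightarrow> r)"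

lemma agent_tuple_simps [simp]:
  "agent_tuple p q r Ag_a = p" "agent_tuple p q r Ag_b = q" "agent_tuple p q r Ag_c = r"
  by (simp_all add: agent_tuple_def)

text \<open>Rewriting local states into this normal form lets the simplifier recognise the same
  view arising in different executions.\<close>
lemma local_state_agent_tuple:
  "local_state G x i =
     agent_tuple (if (Ag_a, i) \<in> G then Some (x Ag_a) else None)
                 (if (Ag_b, i) \<in> G then Some (x Ag_b) else None)
                 (if (Ag_c, i) \<in> G then Some (x Ag_c) else None)"
  unfolding local_state_def agent_tuple_def by (rule ext) (simp split: agent.split)

lemma agent_tuple_in_input_assignments:
  "p \<in> {0,1} \<Longrightarrow> q \<in> {0,1} \<Longrightarrow> r \<in> {0,1} \<Longrightarrow> agent_tuple p q r \<in> input_assignments"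
  unfolding input_assignments_def by (simp add: agent_tuple_def split: agent.split)

definition tas_oneway :: "agent \<Rightarrow> agent \<Rightarrow> agent \<Rightarrow> graph" where
  "tas_oneway w u v = Id \<union> {(w,u), (w,v), (u,v)}"

definition tas_twoway :: "agent \<Rightarrow> agent \<Rightarrow> agent \<Rightarrow> graph" where
  "tas_twoway w u v = Id \<union> {(w,u), (w,v), (u,v), (v,u)}"

lemma tas_oneway_in_tas_graphs: "distinct [w, u, v] \<Longrightarrow> tas_oneway w u v \<in> tas_graphs"
  unfolding tas_graphs_def tas_oneway_def by blast

lemma tas_twoway_in_tas_graphs: "distinct [w, u, v] \<Longrightarrow> tas_twoway w u v \<in> tas_graphs"
  unfolding tas_graphs_def tas_twoway_def by blast

lemma majority_agreement_iff:
  "majority_agreement y \<longleftrightarrow> (y Ag_a = y Ag_b \<and> y Ag_b = y Ag_c) \<or>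
     (y Ag_a = 0 \<and> y Ag_b = 0) \<or> (y Ag_a = 0 \<and> y Ag_c = 0) \<or> (y Ag_b = 0 \<and> y Ag_c = 0)"
proof -
  have zeros: "{i. y i = 0} = (if y Ag_a = 0 then {Ag_a} else {}) \<union> (if y Ag_b = 0 then {Ag_b} else {})
      \<union> (if y Ag_c = 0 then {Ag_c} else {})"
    by (rule set_eqI, case_tac x) auto
  show ?thesis
    unfolding majority_agreement_def zeros
    by (cases "y Ag_a = 0"; cases "y Ag_b = 0"; cases "y Ag_c = 0") simp_all
qed

lemma majority_agreement_nonzero_forces_agreement:
  assumes "majority_agreement y" "y i \<noteq> 0" "distinct [i, j, k]"
  shows "y j = y k"
  using assms unfolding majority_agreement_iff
  by (cases i; cases j; cases k) auto

lemma solves_majority_consensus_execution: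
  assumes "solves_majority_consensus \<delta>" "x \<in> input_assignments" "G \<in> tas_graphs"
  shows "majority_agreement (\<lambda>i. \<delta> i (local_state G x i))"
    and "validity x (\<lambda>i. \<delta> i (local_state G x i))"
  using assms unfolding solves_majority_consensus_def Let_def by auto

lemma decision_on_uniform_input:
  assumes "solves_majority_consensus \<delta>" "v \<in> {0,1}" "G \<in> tas_graphs"
  shows "\<delta> i (local_state G (\<lambda>_. v) i) = v"
proof -
  have "(\<lambda>_. v) \<in> input_assignments"
    using assms(2) unfolding input_assignments_def by simp
  then show ?thesis
    using solves_majority_consensus_execution(2)[OF assms(1) _ assms(3)]
    unfolding validity_def by blast
qed

lemma decision_nonzero_forces_agreement:
  assumes "solves_majority_consensus \<delta>" "x \<in> input_assignments" "G \<in> tas_graphs"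
    and "\<delta> i (local_state G x i) \<noteq> 0" "distinct [i, j, k]"
  shows "\<delta> j (local_state G x j) = \<delta> k (local_state G x k)"
  using majority_agreement_nonzero_forces_agreement[where y = "\<lambda>i. \<delta> i (local_state G x i)"]
    solves_majority_consensus_execution(1)[OF assms(1-3)] assms(4,5) by blast

theorem mainTheorem2:
  shows "\<not> (\<exists>\<delta>. solves_majority_consensus \<delta>)"
proof
  assume "\<exists>\<delta>. solves_majority_consensus \<delta>"
  then obtain \<delta> where \<delta>: "solves_majority_consensus \<delta>" ..
  have input: "agent_tuple 1 1 0 \<in> input_assignments"
    by (rule agent_tuple_in_input_assignments) simp_all
  note uniform = decision_on_uniform_input[OF \<delta>]
  note agree = decision_nonzero_forces_agreement[OF \<delta> input]
  note oneway = tas_oneway_in_tas_graphs and twoway = tas_twoway_in_tas_graphs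
  note views = local_state_agent_tuple tas_oneway_def tas_twoway_def
  let ?full = "agent_tuple (Some 1) (Some 1) (Some 0)"
  have a_alone: "\<delta> Ag_a (agent_tuple (Some 1) None None) = 1"
    using uniform[OF _ twoway[of Ag_a Ag_b Ag_c], of 1 Ag_a] by (simp add: views)
  have b_alone: "\<delta> Ag_b (agent_tuple None (Some 1) None) = 1"
    using uniform[OF _ oneway[of Ag_b Ag_a Ag_c], of 1 Ag_b] by (simp add: views)
  have a_with_b: "\<delta> Ag_a (agent_tuple (Some 1) (Some 1) None) = 1"
    using uniform[OF _ oneway[of Ag_b Ag_a Ag_c], of 1 Ag_a] by (simp add: views)
  have c_alone: "\<delta> Ag_c (agent_tuple None None (Some 0)) = 0"
    using uniform[OF _ twoway[of Ag_c Ag_a Ag_b], of 0 Ag_c] by (simp add: views)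
  have b_eq_c: "\<delta> Ag_b ?full = \<delta> Ag_c ?full"
    using agree[OF twoway[of Ag_a Ag_b Ag_c], of Ag_a Ag_b Ag_c] a_alone by (simp add: views)
  have c_full: "\<delta> Ag_c ?full = 1"
    using agree[OF oneway[of Ag_b Ag_a Ag_c], of Ag_b Ag_a Ag_c] b_alone a_with_b
    by (simp add: views)
  have a_full: "\<delta> Ag_a ?full = 0"
    using agree[OF twoway[of Ag_c Ag_a Ag_b], of Ag_b Ag_a Ag_c] c_alone b_eq_c c_full
    by (simp add: views)
  show False
    using agree[OF twoway[of Ag_b Ag_a Ag_c], of Ag_b Ag_a Ag_c] b_alone a_full c_full
    by (simp add: views)
qed

end
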